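(* Let $\zeta \in \mathbb{C}^*$. The group $G_q(\zeta)$ is finite if and only if $\zeta$ is a primitive $n$-th root of unity for some $n \in \{2,3,4,5\}$.
   Context: Let $q$ be a formal parameter and let $R_q=\begin{pmatrix} q & 1\\ 0 & 1\end{pmatrix}$, $S_q=\begin{pmatrix} 0 & -q^{-1}\\ 1 & 0\end{pmatrix}\in \mathrm{GL}(2,\mathbb{Z}[q,q^{-1}])$. Let $G_q=\langle R_q,S_q\rangle\subset \mathrm{GL}(2,\mathbb{Z}[q,q^{-1}])$ be the group they generate. For $\zeta\in\mathbb{C}^*$, set $G_q(\zeta)=\{M_q|_{q=\zeta} : M_q\in G_q\}\subset \mathrm{GL}(2,\mathbb{C})$ (the group obtained by substituting $q=\zeta$ in all entries). *)

theory Defs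
  imports "HOL-Analysis.Analysis"
begin

text \<open>Elements of GL(2, Z[q,q^-1]) are represented faithfully as functions from the
  value of q to complex 2x2 matrices (a Laurent polynomial over Z is determined by its
  values on nonzero complex numbers).\<close>

definition Rq :: "complex \<Rightarrow> complex^2^2" where
  "Rq q = vector [vector [q, 1], vector [0, 1]]"

definition Sq :: "complex \<Rightarrow> complex^2^2" where
  "Sq q = vector [vector [0, - inverse q], vector [1, 0]]"

inductive_set Gq :: "(complex \<Rightarrow> complex^2^2) set" where
  one: "(\<lambda>q. mat 1) \<in> Gq"
| mulR: "M \<in> Gq \<Longrightarrow> (\<lambda>q. M q ** Rq q) \<in> Gq"
| mulS: "M \<in> Gq \<Longrightarrow> (\<lambda>q. M q ** Sq q) \<in> Gq"
| mulRinv: "M \<in> Gq \<Longrightarrow> (\<lambda>q. M q ** matrix_inv (Rq q)) \<in> Gq"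
| mulSinv: "M \<in> Gq \<Longrightarrow> (\<lambda>q. M q ** matrix_inv (Sq q)) \<in> Gq"

definition Gq_at :: "complex \<Rightarrow> (complex^2^2) set" where
  "Gq_at \<zeta> = {M \<zeta> | M. M \<in> Gq}"

definition primitive_root_of_unity :: "nat \<Rightarrow> complex \<Rightarrow> bool" where
  "primitive_root_of_unity n z \<longleftrightarrow> 0 < n \<and> z ^ n = 1 \<and> (\<forall>k. 0 < k \<and> k < n \<longrightarrow> z ^ k \<noteq> 1)"

end

theory Submission
  imports
    Defs
    "HOL-Computational_Algebra.Polynomial_Factorial"
    "Berlekamp_Zassenhaus.Finite_Field"
begin

text \<open>
  If \<open>\<zeta>\<close> is not a root of unity, the powers of \<open>R\<^sub>q\<close> are already pairwise distinct at \<open>\<zeta>\<close>.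
  If \<open>|\<zeta>| = 1\<close> and \<open>Re \<zeta> \<ge> 1/2\<close>, the moduli of the (2,1) entries of the powers of
  \<open>R\<^sub>q\<^sup>3 S\<^sub>q\<close> form the Lucas sequence \<open>U\<^sub>k(1 + 2 Re \<zeta>, 1)\<close>, which is strictly increasing.

  The entries of every element of \<open>G\<^sub>q\<close> are integer Laurent polynomials in \<open>q\<close>. For a primitive
  \<open>n\<close>-th root of unity \<open>\<zeta>\<close> and \<open>m\<close> coprime to \<open>n\<close>, every integer polynomial vanishing at
  \<open>\<zeta>\<close> also vanishes at \<open>\<zeta>\<^sup>m\<close> (Dedekind's Frobenius argument, i.e. the irreducibility of
  the cyclotomic polynomials). Hence \<open>M(\<zeta>)\<close> determines \<open>M(\<zeta>\<^sup>m)\<close>, so finiteness of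
  \<open>G\<^sub>q(\<zeta>)\<close> passes to \<open>G\<^sub>q(cis (2\<pi>/n))\<close>, and \<open>Re (cis (2\<pi>/n)) \<ge> 1/2\<close>
  once \<open>n \<ge> 6\<close>.

  For \<open>n = 2, 3, 4, 5\<close> the rows of all elements of \<open>G\<^sub>q(\<zeta>)\<close> are signed powers of \<open>\<zeta>\<close>
  times one of 3, 4, 6 or 12 explicit vectors, a set that right multiplication by \<open>R\<^sub>q\<close> and
  \<open>S\<^sub>q\<close> preserves.
\<close>

section \<open>Integer polynomials vanishing at roots of unity\<close>

lemma power_eq_power_mod:
  fixes x :: "'a::monoid_mult"
  assumes "x ^ n = 1"
  shows "x ^ a = x ^ (a mod n)"
proof -
  have "x ^ a = x ^ (n * (a div n) + a mod n)" by simp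
  also have "\<dots> = (x ^ n) ^ (a div n) * x ^ (a mod n)" by (simp only: power_add power_mult)
  finally show ?thesis using assms by simp
qed

lemma freshmans_dream_dvd:
  fixes a b :: "'a::comm_ring_1"
  assumes "prime p"
  shows "of_nat p dvd (a + b) ^ p - (a ^ p + b ^ p)"
proof -
  have p0: "0 < p" using assms prime_gt_0_nat by blast
  have "(a + b) ^ p = (\<Sum>k\<le>p. of_nat (p choose k) * a ^ k * b ^ (p - k))"
    by (rule binomial_ring)
  also have "{..p} = insert 0 (insert p {1..<p})" using p0 by auto
  finally have "(a + b) ^ p - (a ^ p + b ^ p) = (\<Sum>k\<in>{1..<p}. of_nat (p choose k) * a ^ k * b ^ (p - k))"
    using p0 by (simp add: algebra_simps)
  also have "of_nat p dvd \<dots>"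
  proof (rule dvd_sum)
    fix k assume "k \<in> {1..<p}"
    then have "p dvd p choose k" using dvd_choose_prime assms by auto
    then obtain m where "p choose k = p * m" by blast
    then show "of_nat p dvd of_nat (p choose k) * a ^ k * b ^ (p - k)"
      by (simp add: mult.assoc)
  qed
  finally show ?thesis .
qed

lemma fermat_little_int:
  fixes a :: int
  assumes "prime p"
  shows "int p dvd a ^ p - a"
proof (induction a rule: int_induct[of _ 0])
  case base
  show ?case using prime_gt_0_nat[OF assms] by (simp add: zero_power)
next
  case (step1 b)
  have "(b + 1) ^ p - (b + 1) = ((b + 1) ^ p - (b ^ p + 1 ^ p)) + (b ^ p - b)" by simp
  also have "int p dvd \<dots>"
    using freshmans_dream_dvd[OF assms, of b 1] step1(2) by (intro dvd_add) simp_all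
  finally show ?case .
next
  case (step2 b)
  have "int p dvd b ^ p - ((b - 1) ^ p + 1)"
    using freshmans_dream_dvd[OF assms, of "b - 1" 1] by simp
  moreover have "(b - 1) ^ p - (b - 1) = (b ^ p - b) - (b ^ p - ((b - 1) ^ p + 1))" by simp
  ultimately show ?case using dvd_diff[OF step2(2)] by metis
qed

lemma frobenius_int_poly:
  fixes h :: "int poly"
  assumes p: "prime p"
  shows "[:int p:] dvd h ^ p - h \<circ>\<^sub>p [:0, 1:] ^ p"
proof (induction h)
  case 0
  then show ?case using prime_gt_0_nat[OF p] by (simp add: zero_power)
next
  case (pCons a h)
  let ?X = "[:0, 1:] :: int poly"
  have pCons_eq: "[:a:] + ?X * h = pCons a h" by simp
  have "pCons a h ^ p - (pCons a h) \<circ>\<^sub>p ?X ^ p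
      = (pCons a h ^ p - ([:a:] ^ p + (?X * h) ^ p)) + ([:a:] ^ p - [:a:])
        + ?X ^ p * (h ^ p - h \<circ>\<^sub>p ?X ^ p)"
    unfolding pcompose_pCons power_mult_distrib by (simp only: right_diff_distrib diff_add_eq add_diff_eq diff_diff_eq2)
  moreover have "[:int p:] dvd pCons a h ^ p - ([:a:] ^ p + (?X * h) ^ p)"
    using freshmans_dream_dvd[OF p, of "[:a:]" "?X * h"] unfolding pCons_eq by (simp only: of_nat_poly of_nat_eq_id id_apply)
  moreover have "[:int p:] dvd [:a:] ^ p - [:a:]"
    using fermat_little_int[OF p, of a] by (simp add: poly_const_pow diff_pCons)
  ultimately show ?case using pCons.IH by (metis dvd_add dvd_mult)
qed

lemma int_minimal_polynomial:
  fixes z :: complex and P :: "int poly"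
  assumes "P \<noteq> 0" and "poly (of_int_poly P) z = 0"
  obtains f where "poly (of_int_poly f) z = 0" "\<And>g. poly (of_int_poly g) z = 0 \<Longrightarrow> f dvd g"
proof -
  let ?S = "\<lambda>f. f \<noteq> 0 \<and> poly (of_int_poly f) z = 0"
  obtain f0 where f0: "?S f0" and f0_min: "\<And>f'. ?S f' \<Longrightarrow> degree f0 \<le> degree f'"
    using ex_has_least_nat[of ?S P degree] assms by blast
  define f where "f = primitive_part f0"
  have "f \<noteq> 0" "content f = 1" "degree f = degree f0"
    using f0 by (simp_all add: f_def)
  have "f0 = [:content f0:] * f" by (simp add: f_def)
  from arg_cong[OF this, of "\<lambda>h. poly (of_int_poly h) z"]
  have "poly (of_int_poly f0) z = of_int (content f0) * poly (of_int_poly f) z"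
    by (simp add: hom_distribs)
  then have f_root: "poly (of_int_poly f) z = 0" using f0 by simp
  \<comment> \<open>The remainder of \<open>g\<close> modulo \<open>f\<close> vanishes at \<open>z\<close> and has smaller degree, so it is zero;
    Gauss's lemma (\<open>fract_poly_dvdD\<close>) removes the leading-coefficient factor.\<close>
  have "f dvd g" if g: "poly (of_int_poly g) z = 0" for g
  proof -
    obtain q r where qr: "pseudo_divmod g f = (q, r)" by fastforce
    define c where "c = lead_coeff f ^ (Suc (degree g) - degree f)"
    have c0: "c \<noteq> 0" using \<open>f \<noteq> 0\<close> by (simp add: c_def)
    have cg: "[:c:] * g = f * q + r" and "r = 0 \<or> degree r < degree f"
      using pseudo_divmod[OF \<open>f \<noteq> 0\<close> qr] unfolding c_def by auto
    have "poly (of_int_poly r) z = 0"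
      using arg_cong[OF cg, of "\<lambda>h. poly (of_int_poly h) z"] g f_root by (simp add: hom_distribs)
    then have "r = 0"
      using \<open>r = 0 \<or> degree r < degree f\<close> f0_min[of r] \<open>degree f = degree f0\<close> by fastforce
    then have "fract_poly g = fract_poly f * ([:inverse (to_fract c):] * fract_poly q)"
      using arg_cong[OF cg, of "\<lambda>h. [:inverse (to_fract c):] * fract_poly h"] c0
      by (simp add: mult_smult_right)
    then have "fract_poly f dvd fract_poly g" by (rule dvdI)
    then show "f dvd g" using \<open>content f = 1\<close> by (rule fract_poly_dvdD)
  qed
  with f_root that show ?thesis by blast
qed

lemma diff_dvd_power_diff:
  fixes a b :: "'a::comm_ring_1"
  shows "a - b dvd a ^ n - b ^ n"
proof (induction n)
  case (Suc n)
  have "a ^ Suc n - b ^ Suc n = a * (a ^ n - b ^ n) + (a - b) * b ^ n"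
    by (simp add: algebra_simps)
  then show ?case using Suc by simp
qed simp

lemma dvd_of_const_in_ideal:
  fixes f A :: "int poly"
  assumes lc: "\<bar>lead_coeff f\<bar> = 1" and "0 < degree f" and f_dvd: "f dvd [:c:] - [:P:] * A"
  shows "P dvd c"
proof -
  have "f \<noteq> 0" using lc by auto
  obtain q r where qr: "pseudo_divmod A f = (q, r)" by fastforce
  define u where "u = lead_coeff f ^ (Suc (degree A) - degree f)"
  have A: "[:u:] * A = f * q + r" and r: "r = 0 \<or> degree r < degree f"
    using pseudo_divmod[OF \<open>f \<noteq> 0\<close> qr] unfolding u_def by auto
  have "\<bar>u\<bar> = 1" unfolding u_def using lc by (simp add: power_abs)
  then have "is_unit u" by (simp add: abs_mult_self_eq)
  have "[:u * c:] - [:P:] * r = [:u:] * ([:c:] - [:P:] * A) + f * ([:P:] * q)"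
    using A by (simp add: algebra_simps smult_add_right)
  also have "f dvd \<dots>" by (intro dvd_add dvd_mult[OF f_dvd] dvd_triv_left)
  finally have f_dvd_r: "f dvd [:u * c:] - [:P:] * r" .
  have "degree ([:u * c:] - [:P:] * r) < degree f"
    using r \<open>0 < degree f\<close> degree_diff_le_max[of "[:u * c:]" "[:P:] * r"] degree_mult_le[of "[:P:]" r]
    by auto
  then have "[:u * c:] = [:P:] * r"
    using f_dvd_r dvd_imp_degree_le[OF f_dvd_r] \<open>f \<noteq> 0\<close> by fastforce
  then have "u * c = P * poly r 0" by (metis poly_pCons poly_0 poly_mult mult_zero_left add_0_right)
  then have "P dvd u * c" by simp
  then show ?thesis using \<open>is_unit u\<close> by (simp add: dvd_mult_unit_iff')
qed

lemma prime_dvd_exponent_if_repeated_factor: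
  fixes f h :: "int poly"
  defines "X \<equiv> [:0, 1:] :: int poly"
  assumes Ffh: "X ^ n - 1 = f * h" and "0 < n" and p: "prime p"
    and lc_f: "\<bar>lead_coeff f\<bar> = 1" and deg_f: "0 < degree f" and f_dvd: "f dvd h \<circ>\<^sub>p X ^ p"
  shows "p dvd n"
proof -
  \<comment> \<open>Modulo \<open>p\<close> we have \<open>h(x\<^sup>p) = h\<^sup>p\<close>, so \<open>f\<close> and \<open>h\<close> share a factor; differentiating
    \<open>x\<^sup>n - 1 = f h\<close> then puts the constant \<open>n\<^sup>p\<close> into the ideal \<open>(p, f)\<close>.\<close>
  obtain r where "h ^ p - h \<circ>\<^sub>p X ^ p = [:int p:] * r"
    using frobenius_int_poly[OF p, of h] unfolding X_def by (auto elim: dvdE)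
  then have "h ^ p - [:int p:] * r = h \<circ>\<^sub>p X ^ p" by simp
  with f_dvd have f_frob: "f dvd h ^ p - [:int p:] * r" by simp
  define D where "D = pderiv (X ^ n - 1)"
  have "D = h * pderiv f + f * pderiv h"
    unfolding D_def Ffh pderiv_mult by (rule add.commute)
  then have "f dvd D - h * pderiv f" by simp
  then have f_D: "f dvd D ^ p - (h * pderiv f) ^ p"
    by (rule dvd_trans[OF _ diff_dvd_power_diff])
  have "D ^ p * X ^ p = [:int n ^ p:] * (X ^ n) ^ p"
  proof -
    have "D = [:int n:] * X ^ (n - 1)"
      by (simp add: D_def X_def pderiv_diff pderiv_power pderiv_pCons)
    moreover have "(X ^ (n - 1)) ^ p * X ^ p = (X ^ n) ^ p"
      using \<open>0 < n\<close> by (simp add: power_mult_distrib[symmetric] power_Suc2[symmetric])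
    ultimately show ?thesis by (simp add: smult_power)
  qed
  then have "D ^ p * X ^ p - [:int n ^ p:] = [:int n ^ p:] * ((X ^ n) ^ p - 1 ^ p)"
    by (simp add: right_diff_distrib)
  moreover have "X ^ n - 1 dvd (X ^ n) ^ p - 1 ^ p" by (rule diff_dvd_power_diff)
  ultimately have "X ^ n - 1 dvd D ^ p * X ^ p - [:int n ^ p:]" by (simp add: dvd_smult)
  then have f_X: "f dvd D ^ p * X ^ p - [:int n ^ p:]" by (rule dvd_trans[OF dvd_triv_left[of f h, folded Ffh]])
  have "[:int n ^ p:] - [:int p:] * (r * pderiv f ^ p * X ^ p)
      = (D ^ p - (h * pderiv f) ^ p) * X ^ p + (h ^ p - [:int p:] * r) * pderiv f ^ p * X ^ p
        - (D ^ p * X ^ p - [:int n ^ p:])"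
    by (simp add: algebra_simps power_mult_distrib)
  also have "f dvd \<dots>"
    by (intro dvd_diff[OF dvd_add f_X] dvd_mult2[OF f_D] dvd_mult2[OF dvd_mult2[OF f_frob]])
  finally have "int p dvd int n ^ p" by (rule dvd_of_const_in_ideal[OF lc_f deg_f])
  then have "int p dvd int (n ^ p)" by simp
  then have "p dvd n ^ p" by (simp only: int_dvd_int_iff)
  then show "p dvd n" using p prime_dvd_power by blast
qed

lemma int_poly_root_power_prime:
  fixes z :: complex and g :: "int poly"
  assumes zn: "z ^ n = 1" and "0 < n" and p: "prime p" and "\<not> p dvd n"
    and g: "poly (of_int_poly g) z = 0"
  shows "poly (of_int_poly g) (z ^ p) = 0"
proof -
  define X :: "int poly" where "X = [:0, 1:]"
  have ev_X: "poly (of_int_poly X) w = w" for w :: complex by (simp add: X_def)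
  have ev_F: "poly (of_int_poly (X ^ n - 1)) w = w ^ n - 1" for w :: complex
    by (simp add: ev_X hom_distribs)
  have "lead_coeff (- 1 + X ^ n) = 1" using \<open>0 < n\<close> unfolding X_def
    by (subst lead_coeff_add_le) (simp_all add: degree_power_eq coeff_linear_power del: pCons_one)
  then have lc_F: "lead_coeff (X ^ n - 1) = 1" by simp
  then have "X ^ n - 1 \<noteq> 0" by auto
  have F_root: "poly (of_int_poly (X ^ n - 1)) z = 0" using ev_F zn by simp
  obtain f where f_root: "poly (of_int_poly f) z = 0"
    and f_min: "\<And>g. poly (of_int_poly g) z = 0 \<Longrightarrow> f dvd g"
    using int_minimal_polynomial[OF \<open>X ^ n - 1 \<noteq> 0\<close> F_root] by blast
  obtain h where Ffh: "X ^ n - 1 = f * h" using f_min[OF F_root] by (rule dvdE)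
  have "lead_coeff f * lead_coeff h = 1" using lc_F Ffh by (simp add: lead_coeff_mult)
  then have lc_f: "\<bar>lead_coeff f\<bar> = 1" by (metis dvdI zdvd1_eq)
  have deg_f: "0 < degree f"
    using f_root lc_f by (cases f rule: pCons_cases) (auto simp: degree_pCons_eq_if split: if_splits)
  have "poly (of_int_poly f) (z ^ p) = 0"
  proof (rule ccontr)
    assume f_nz: "poly (of_int_poly f) (z ^ p) \<noteq> 0"
    have "(z ^ p) ^ n = 1" by (metis zn power_mult mult.commute power_one)
    then have "poly (of_int_poly f) (z ^ p) * poly (of_int_poly h) (z ^ p) = 0"
      using ev_F[of "z ^ p"] Ffh by (simp add: hom_distribs)
    then have "poly (of_int_poly h) (z ^ p) = 0" using f_nz by simp
    then have "f dvd h \<circ>\<^sub>p X ^ p"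
      by (intro f_min) (simp add: hom_distribs poly_pcompose ev_X)
    then have "p dvd n"
      using prime_dvd_exponent_if_repeated_factor[OF _ \<open>0 < n\<close> p lc_f deg_f] Ffh unfolding X_def by blast
    with \<open>\<not> p dvd n\<close> show False ..
  qed
  moreover obtain m where "g = f * m" using f_min[OF g] by (rule dvdE)
  ultimately show ?thesis by (simp add: hom_distribs)
qed

lemma int_poly_root_power_coprime:
  fixes z :: complex and g :: "int poly"
  assumes zn: "z ^ n = 1" and "0 < n" and g: "poly (of_int_poly g) z = 0" and "coprime m n"
  shows "poly (of_int_poly g) (z ^ m) = 0"
  using \<open>coprime m n\<close>
proof (induction m rule: prime_divisors_induct)
  case zero
  then have "z = 1" using zn by simp
  then show ?case using g by simp
next
  case (unit m)
  then show ?case using g by simp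
next
  case (factor p m)
  then have "\<not> p dvd n" "coprime m n"
    using coprime_common_divisor not_prime_unit by (auto simp: coprime_mult_left_iff)
  moreover have "(z ^ m) ^ n = 1" by (metis zn power_mult mult.commute power_one)
  ultimately have "poly (of_int_poly g) ((z ^ m) ^ p) = 0"
    using int_poly_root_power_prime[OF _ \<open>0 < n\<close> \<open>prime p\<close>] factor.IH by blast
  then show ?case by (simp add: power_mult mult.commute)
qed

lemma primitive_root_power_eq_cis:
  assumes "primitive_root_of_unity n z"
  obtains m where "coprime m n" "z ^ m = cis (2 * pi / n)"
proof -
  have "0 < n" and zn: "z ^ n = 1" and z_prim: "\<And>k. 0 < k \<Longrightarrow> k < n \<Longrightarrow> z ^ k \<noteq> 1"
    using assms unfolding primitive_root_of_unity_def by auto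
  define \<omega> where "\<omega> = cis (2 * pi / n)"
  have \<omega>_pow: "\<omega> ^ k = cis (2 * pi * k / n)" for k
    unfolding \<omega>_def Complex.DeMoivre by (simp add: field_simps)
  have \<omega>_n: "\<omega> ^ n = 1" using \<omega>_pow[of n] \<open>0 < n\<close> by simp
  obtain k where "z = \<omega> ^ k"
    using Complex.bij_betw_roots_unity[OF \<open>0 < n\<close>] zn unfolding bij_betw_def \<omega>_pow by auto
  have "coprime k n"
  proof (rule ccontr)
    assume "\<not> coprime k n"
    define d where "d = gcd k n"
    have "d \<noteq> 1" using \<open>\<not> coprime k n\<close> unfolding d_def by (simp add: coprime_iff_gcd_eq_1)
    obtain n' where n': "n = d * n'" unfolding d_def by (metis dvd_def gcd_dvd2)
    obtain k' where k': "k = d * k'" unfolding d_def by (metis dvd_def gcd_dvd1)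
    have "0 < n'" "n' < n" using n' \<open>0 < n\<close> \<open>d \<noteq> 1\<close> by (auto simp: nat_0_less_mult_iff)
    moreover have "z ^ n' = 1"
    proof -
      have "z ^ n' = (\<omega> ^ n) ^ k'" using \<open>z = \<omega> ^ k\<close> n' k' by (simp flip: power_mult add: mult_ac)
      then show ?thesis using \<omega>_n by simp
    qed
    ultimately show False using z_prim by blast
  qed
  then obtain m where m: "[k * m = 1] (mod n)" using cong_solve_coprime_nat by auto
  have "coprime m n" using cong_imp_coprime[OF cong_sym[OF m]] by simp
  moreover have "z ^ m = \<omega>"
  proof -
    have "z ^ m = \<omega> ^ (k * m mod n)"
      using \<open>z = \<omega> ^ k\<close> power_eq_power_mod[OF \<omega>_n, of "k * m"] by (simp add: power_mult)
    also have "k * m mod n = 1 mod n" using m by (simp add: cong_def)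
    finally show ?thesis using \<omega>_n by (cases "n = 1") auto
  qed
  ultimately show ?thesis using that unfolding \<omega>_def by blast
qed

section \<open>Integer Laurent polynomial entries\<close>

lemma mat2_eqI:
  fixes A B :: "'a^2^2"
  assumes "A$1$1 = B$1$1" "A$1$2 = B$1$2" "A$2$1 = B$2$1" "A$2$2 = B$2$2"
  shows "A = B"
  using assms by (simp add: vec_eq_iff forall_2)

lemma matrix_mult_nth_2:
  "((A :: 'a::semiring_1^2^2) ** B) $ i $ j = A $ i $ 1 * B $ 1 $ j + A $ i $ 2 * B $ 2 $ j"
  by (simp add: matrix_matrix_mult_def sum_2)

lemma mat_1_nth_2 [simp]:
  "(mat 1 :: 'a::zero_neq_one^2^2) $ 1 $ 1 = 1" "(mat 1 :: 'a^2^2) $ 1 $ 2 = 0"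
  "(mat 1 :: 'a^2^2) $ 2 $ 1 = 0" "(mat 1 :: 'a^2^2) $ 2 $ 2 = 1"
  by (simp_all add: mat_def)

lemma Rq_nth [simp]: "Rq q $ 1 $ 1 = q" "Rq q $ 1 $ 2 = 1" "Rq q $ 2 $ 1 = 0" "Rq q $ 2 $ 2 = 1"
  by (simp_all add: Rq_def)

lemma Sq_nth [simp]: "Sq q $ 1 $ 1 = 0" "Sq q $ 1 $ 2 = - inverse q" "Sq q $ 2 $ 1 = 1" "Sq q $ 2 $ 2 = 0"
  by (simp_all add: Sq_def)

lemma matrix_inv_unique:
  fixes A B :: "'a::semiring_1^'n^'n"
  assumes "A ** B = mat 1" and "B ** A = mat 1"
  shows "matrix_inv A = B"
proof -
  have inv: "A ** matrix_inv A = mat 1 \<and> matrix_inv A ** A = mat 1"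
    unfolding matrix_inv_def by (rule someI[of _ B]) (use assms in blast)
  have "matrix_inv A = (B ** A) ** matrix_inv A" using assms(2) by simp
  also have "\<dots> = B" using inv by (simp add: matrix_mul_assoc[symmetric])
  finally show ?thesis .
qed

lemma matrix_inv_Rq:
  "q \<noteq> 0 \<Longrightarrow> matrix_inv (Rq q) = vector [vector [inverse q, - inverse q], vector [0, 1]]"
  by (intro matrix_inv_unique mat2_eqI) (simp_all add: matrix_mult_nth_2 field_simps)

lemma matrix_inv_Sq:
  "q \<noteq> 0 \<Longrightarrow> matrix_inv (Sq q) = vector [vector [0, 1], vector [- q, 0]]"
  by (intro matrix_inv_unique mat2_eqI) (simp_all add: matrix_mult_nth_2 field_simps)

text \<open>Only values at \<open>q \<noteq> 0\<close> are constrained: at \<open>q = 0\<close> the generators carry junk values.\<close>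

definition int_laurent :: "(complex \<Rightarrow> complex) \<Rightarrow> bool" where
  "int_laurent \<phi> \<longleftrightarrow> (\<exists>(P :: int poly) e. \<forall>q. q \<noteq> 0 \<longrightarrow> \<phi> q = poly (of_int_poly P) q / q ^ e)"

lemma int_laurent_cong:
  assumes "int_laurent \<phi>" and "\<And>q. q \<noteq> 0 \<Longrightarrow> \<phi> q = \<psi> q"
  shows "int_laurent \<psi>"
  using assms unfolding int_laurent_def by metis

lemma int_laurent_of_int: "int_laurent (\<lambda>q. of_int c)"
  unfolding int_laurent_def by (rule exI[of _ "[:c:]"], rule exI[of _ 0]) (cases "c = 0"; simp add: map_poly_pCons)

lemma int_laurent_0: "int_laurent (\<lambda>q. 0)" and int_laurent_1: "int_laurent (\<lambda>q. 1)"
  using int_laurent_of_int[of 0] int_laurent_of_int[of 1] by simp_all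

lemma int_laurent_ident: "int_laurent (\<lambda>q. q)"
  unfolding int_laurent_def by (rule exI[of _ "[:0, 1:]"], rule exI[of _ 0]) simp

lemma int_laurent_inverse: "int_laurent (\<lambda>q. inverse q)"
  unfolding int_laurent_def by (rule exI[of _ 1], rule exI[of _ 1]) (simp add: field_simps)

lemma int_laurent_add:
  assumes "int_laurent \<phi>" and "int_laurent \<psi>"
  shows "int_laurent (\<lambda>q. \<phi> q + \<psi> q)"
proof -
  obtain P e where P: "\<And>q. q \<noteq> 0 \<Longrightarrow> \<phi> q = poly (of_int_poly P) q / q ^ e"
    using assms(1) unfolding int_laurent_def by blast
  obtain Q f where Q: "\<And>q. q \<noteq> 0 \<Longrightarrow> \<psi> q = poly (of_int_poly Q) q / q ^ f"
    using assms(2) unfolding int_laurent_def by blast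
  have "\<phi> q + \<psi> q = poly (of_int_poly (P * [:0, 1:] ^ f + Q * [:0, 1:] ^ e)) q / q ^ (e + f)"
    if "q \<noteq> 0" for q
    using P[OF that] Q[OF that] that by (simp add: hom_distribs field_simps power_add)
  then show ?thesis unfolding int_laurent_def by blast
qed

lemma int_laurent_mult:
  assumes "int_laurent \<phi>" and "int_laurent \<psi>"
  shows "int_laurent (\<lambda>q. \<phi> q * \<psi> q)"
proof -
  obtain P e where P: "\<And>q. q \<noteq> 0 \<Longrightarrow> \<phi> q = poly (of_int_poly P) q / q ^ e"
    using assms(1) unfolding int_laurent_def by blast
  obtain Q f where Q: "\<And>q. q \<noteq> 0 \<Longrightarrow> \<psi> q = poly (of_int_poly Q) q / q ^ f"
    using assms(2) unfolding int_laurent_def by blast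
  have "\<phi> q * \<psi> q = poly (of_int_poly (P * Q)) q / q ^ (e + f)" if "q \<noteq> 0" for q
    using P[OF that] Q[OF that] that by (simp add: hom_distribs power_add)
  then show ?thesis unfolding int_laurent_def by blast
qed

lemma int_laurent_uminus: "int_laurent \<phi> \<Longrightarrow> int_laurent (\<lambda>q. - \<phi> q)"
  using int_laurent_mult[OF int_laurent_of_int[of "-1"]] by simp

lemma int_laurent_diff: "int_laurent \<phi> \<Longrightarrow> int_laurent \<psi> \<Longrightarrow> int_laurent (\<lambda>q. \<phi> q - \<psi> q)"
  using int_laurent_add[OF _ int_laurent_uminus] by simp

lemma int_laurent_root_transfer:
  assumes "int_laurent \<phi>" and "z \<noteq> 0" and "w \<noteq> 0"
    and roots: "\<And>P. poly (of_int_poly P) z = 0 \<Longrightarrow> poly (of_int_poly P) w = 0"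
    and "\<phi> z = 0"
  shows "\<phi> w = 0"
proof -
  obtain P e where P: "\<And>q. q \<noteq> 0 \<Longrightarrow> \<phi> q = poly (of_int_poly P) q / q ^ e"
    using assms(1) unfolding int_laurent_def by blast
  have "poly (of_int_poly P) w = 0" using roots P[of z] assms(2,5) by simp
  then show ?thesis using P[of w] assms(3) by simp
qed

definition laurent_matrix :: "(complex \<Rightarrow> complex^2^2) \<Rightarrow> bool" where
  "laurent_matrix M \<longleftrightarrow> (\<forall>i j. int_laurent (\<lambda>q. M q $ i $ j))"

lemma laurent_matrix_mult:
  assumes "laurent_matrix M" and "laurent_matrix N"
  shows "laurent_matrix (\<lambda>q. M q ** N q)"
  using assms unfolding laurent_matrix_def matrix_mult_nth_2
  by (intro allI int_laurent_add int_laurent_mult) blast+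

lemma laurent_matrix_cong:
  assumes "laurent_matrix M" and "\<And>q. q \<noteq> 0 \<Longrightarrow> M q = N q"
  shows "laurent_matrix N"
  unfolding laurent_matrix_def
proof (intro allI)
  fix i j
  have "int_laurent (\<lambda>q. M q $ i $ j)" using assms(1) unfolding laurent_matrix_def by blast
  then show "int_laurent (\<lambda>q. N q $ i $ j)" by (rule int_laurent_cong) (simp add: assms(2))
qed

lemma laurent_matrix_vector:
  assumes "int_laurent a" "int_laurent b" "int_laurent c" "int_laurent d"
  shows "laurent_matrix (\<lambda>q. vector [vector [a q, b q], vector [c q, d q]])"
  using assms unfolding laurent_matrix_def forall_2 by simp

lemma laurent_matrix_Gq: "M \<in> Gq \<Longrightarrow> laurent_matrix M"
proof (induction rule: Gq.induct)
  case one
  have "laurent_matrix (\<lambda>q. vector [vector [1, 0], vector [0, 1]])"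
    by (intro laurent_matrix_vector int_laurent_0 int_laurent_1)
  moreover have "vector [vector [1, 0], vector [0, 1]] = (mat 1 :: complex^2^2)"
    by (rule mat2_eqI) simp_all
  ultimately show ?case by simp
next
  case (mulR M)
  have "laurent_matrix Rq" unfolding Rq_def
    by (intro laurent_matrix_vector int_laurent_ident int_laurent_0 int_laurent_1)
  with mulR.IH show ?case by (rule laurent_matrix_mult)
next
  case (mulS M)
  have "laurent_matrix Sq" unfolding Sq_def
    by (intro laurent_matrix_vector int_laurent_uminus int_laurent_inverse int_laurent_0 int_laurent_1)
  with mulS.IH show ?case by (rule laurent_matrix_mult)
next
  case (mulRinv M)
  have "laurent_matrix (\<lambda>q. matrix_inv (Rq q))"
    by (rule laurent_matrix_cong[OF laurent_matrix_vector matrix_inv_Rq[symmetric]])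
      (intro int_laurent_uminus int_laurent_inverse int_laurent_0 int_laurent_1)+
  with mulRinv.IH show ?case by (rule laurent_matrix_mult)
next
  case (mulSinv M)
  have "laurent_matrix (\<lambda>q. matrix_inv (Sq q))"
    by (rule laurent_matrix_cong[OF laurent_matrix_vector matrix_inv_Sq[symmetric]])
      (intro int_laurent_uminus int_laurent_ident int_laurent_0 int_laurent_1)+
  with mulSinv.IH show ?case by (rule laurent_matrix_mult)
qed

lemma Gq_eval_transfer:
  assumes "M \<in> Gq" "N \<in> Gq" and "M z = N z" and "z \<noteq> 0" "w \<noteq> 0"
    and roots: "\<And>P. poly (of_int_poly P) z = 0 \<Longrightarrow> poly (of_int_poly P) w = 0"
  shows "M w = N w"
proof -
  have "M w $ i $ j - N w $ i $ j = 0" for i j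
  proof (rule int_laurent_root_transfer[OF _ \<open>z \<noteq> 0\<close> \<open>w \<noteq> 0\<close> roots])
    show "int_laurent (\<lambda>q. M q $ i $ j - N q $ i $ j)"
      using laurent_matrix_Gq[OF \<open>M \<in> Gq\<close>] laurent_matrix_Gq[OF \<open>N \<in> Gq\<close>]
      unfolding laurent_matrix_def by (intro int_laurent_diff) blast+
    show "M z $ i $ j - N z $ i $ j = 0" using \<open>M z = N z\<close> by simp
  qed
  then show ?thesis by (simp add: vec_eq_iff)
qed

lemma finite_Gq_at_transfer:
  assumes "z \<noteq> 0" "w \<noteq> 0"
    and roots: "\<And>P. poly (of_int_poly P) z = 0 \<Longrightarrow> poly (of_int_poly P) w = 0"
    and "finite (Gq_at z)"
  shows "finite (Gq_at w)"
proof -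
  define lift where "lift A = (SOME M. M \<in> Gq \<and> M z = A) w" for A
  have "Gq_at w \<subseteq> lift ` Gq_at z"
  proof
    fix B assume "B \<in> Gq_at w"
    then obtain M where M: "M \<in> Gq" "B = M w" unfolding Gq_at_def by blast
    define N where "N = (SOME N. N \<in> Gq \<and> N z = M z)"
    have "N \<in> Gq \<and> N z = M z" unfolding N_def by (rule someI[of _ M]) (simp add: M(1))
    then have "lift (M z) = M w"
      unfolding lift_def N_def[symmetric] using Gq_eval_transfer assms(1-3) M(1) by blast
    moreover have "M z \<in> Gq_at z" unfolding Gq_at_def using M(1) by blast
    ultimately show "B \<in> lift ` Gq_at z" using M(2) by force
  qed
  then show ?thesis using assms(4) finite_surj by blast
qed

section \<open>Infinite specializations\<close>

primrec mat_power :: "'a::semiring_1^'n^'n \<Rightarrow> nat \<Rightarrow> 'a^'n^'n" where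
  "mat_power A 0 = mat 1"
| "mat_power A (Suc k) = mat_power A k ** A"

lemma Gq_mult:
  assumes "M \<in> Gq" and "N \<in> Gq"
  shows "(\<lambda>q. M q ** N q) \<in> Gq"
  using assms(2)
proof (induction rule: Gq.induct)
  case one
  then show ?case using assms(1) by simp
next
  case (mulR N)
  then show ?case using Gq.mulR by (simp add: matrix_mul_assoc)
next
  case (mulS N)
  then show ?case using Gq.mulS by (simp add: matrix_mul_assoc)
next
  case (mulRinv N)
  then show ?case using Gq.mulRinv by (simp add: matrix_mul_assoc)
next
  case (mulSinv N)
  then show ?case using Gq.mulSinv by (simp add: matrix_mul_assoc)
qed

lemma Rq_in_Gq: "Rq \<in> Gq" and Sq_in_Gq: "Sq \<in> Gq"
  using Gq.mulR[OF Gq.one] Gq.mulS[OF Gq.one] by simp_all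

lemma mat_power_in_Gq: "M \<in> Gq \<Longrightarrow> (\<lambda>q. mat_power (M q) k) \<in> Gq"
  by (induction k) (simp_all add: Gq.one Gq_mult)

lemma infinite_Gq_at_if_inj:
  assumes "\<And>k. M k \<in> Gq" and "inj (\<lambda>k::nat. M k \<zeta>)"
  shows "infinite (Gq_at \<zeta>)"
proof
  assume "finite (Gq_at \<zeta>)"
  moreover have "range (\<lambda>k. M k \<zeta>) \<subseteq> Gq_at \<zeta>" using assms(1) unfolding Gq_at_def by blast
  ultimately have "finite (range (\<lambda>k. M k \<zeta>))" by (rule finite_subset[rotated])
  then show False using assms(2) finite_imageD by blast
qed

lemma mat_power_Rq_nth: "mat_power (Rq q) k $ 1 $ 1 = q ^ k"
  by (induction k) (simp_all add: matrix_mult_nth_2)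

lemma infinite_Gq_at_not_root_of_unity:
  assumes "q \<noteq> 0" and "\<And>k. 0 < k \<Longrightarrow> q ^ k \<noteq> 1"
  shows "infinite (Gq_at q)"
proof (rule infinite_Gq_at_if_inj[of "\<lambda>k q. mat_power (Rq q) k"])
  show "(\<lambda>q. mat_power (Rq q) k) \<in> Gq" for k by (rule mat_power_in_Gq[OF Rq_in_Gq])
  have "q ^ a \<noteq> q ^ b" if "a < b" for a b
  proof
    assume "q ^ a = q ^ b"
    also have "q ^ b = q ^ a * q ^ (b - a)" using \<open>a < b\<close> by (simp flip: power_add)
    finally have "q ^ (b - a) = 1" using \<open>q \<noteq> 0\<close> by simp
    then show False using assms(2) \<open>a < b\<close> by simp
  qed
  then have "inj (\<lambda>k. q ^ k)" by (metis injI linorder_neqE_nat)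
  then have "inj ((\<lambda>A. A $ 1 $ 1) \<circ> (\<lambda>k. mat_power (Rq q) k))"
    by (simp add: comp_def mat_power_Rq_nth)
  then show "inj (\<lambda>k. mat_power (Rq q) k)" by (rule inj_on_imageI2)
qed

fun lucas_U :: "real \<Rightarrow> nat \<Rightarrow> real" where
  "lucas_U c 0 = 0"
| "lucas_U c (Suc 0) = 1"
| "lucas_U c (Suc (Suc k)) = c * lucas_U c (Suc k) - lucas_U c k"

lemma lucas_U_growth:
  assumes "2 \<le> c"
  shows "0 \<le> lucas_U c k \<and> lucas_U c k + 1 \<le> lucas_U c (Suc k)"
proof (induction k)
  case (Suc k)
  then have "2 * lucas_U c (Suc k) \<le> c * lucas_U c (Suc k)"
    using assms by (intro mult_right_mono) auto
  then show ?case using Suc by (simp only: lucas_U.simps) linarith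
qed simp

lemma strict_mono_lucas_U:
  assumes "2 \<le> c"
  shows "strict_mono (lucas_U c)"
proof (rule strict_monoI_Suc)
  show "lucas_U c k < lucas_U c (Suc k)" for k
    using lucas_U_growth[OF assms, of k] by linarith
qed

lemma unit_circle_geometric_sum:
  fixes q :: complex
  assumes "norm q = 1"
  shows "1 + q + q ^ 2 = q * of_real (1 + 2 * Re q)"
proof -
  have "q * of_real (1 + 2 * Re q) = q * (1 + (q + cnj q))" by (simp add: complex_add_cnj)
  also have "\<dots> = q + q ^ 2 + q * cnj q" by (simp add: algebra_simps power2_eq_square)
  also have "q * cnj q = 1" using assms complex_norm_square[of q] by simp
  finally show ?thesis by simp
qed

lemma R3S_power_row_2:
  fixes q :: complex
  assumes "norm q = 1"
  defines "W \<equiv> Rq q ** Rq q ** Rq q ** Sq q" and "c \<equiv> 1 + 2 * Re q"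
  shows "mat_power W (Suc k) $ 2 $ 1 = q ^ k * of_real (lucas_U c (Suc k))
    \<and> mat_power W (Suc k) $ 2 $ 2 = - (q ^ Suc k * of_real (lucas_U c k))"
proof -
  have "q \<noteq> 0" using assms by auto
  have W: "W $ 1 $ 1 = 1 + q + q ^ 2" "W $ 1 $ 2 = - (q ^ 2)" "W $ 2 $ 1 = 1" "W $ 2 $ 2 = 0"
    using \<open>q \<noteq> 0\<close> by (simp_all add: W_def matrix_mult_nth_2 field_simps power2_eq_square)
  have "1 + q + q ^ 2 = q * of_real c" unfolding c_def by (rule unit_circle_geometric_sum[OF assms(1)])
  show ?thesis
  proof (induction k)
    case 0
    show ?case using W by (simp add: matrix_mult_nth_2)
  next
    case (Suc k)
    let ?M = "mat_power W (Suc k)"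
    have "mat_power W (Suc (Suc k)) $ 2 $ 1 = ?M $ 2 $ 1 * (q * of_real c) + ?M $ 2 $ 2"
      "mat_power W (Suc (Suc k)) $ 2 $ 2 = - (?M $ 2 $ 1 * q ^ 2)"
      using W \<open>1 + q + q ^ 2 = q * of_real c\<close>
      by (simp_all only: mat_power.simps(2)[of W "Suc k"] matrix_mult_nth_2) simp_all
    then show ?case using Suc by (simp add: algebra_simps power2_eq_square)
  qed
qed

lemma infinite_Gq_at_unit_circle:
  fixes q :: complex
  assumes "norm q = 1" and "1 / 2 \<le> Re q"
  shows "infinite (Gq_at q)"
proof (rule infinite_Gq_at_if_inj[of "\<lambda>k q. mat_power (Rq q ** Rq q ** Rq q ** Sq q) (Suc k)"])
  show "(\<lambda>q. mat_power (Rq q ** Rq q ** Rq q ** Sq q) (Suc k)) \<in> Gq" for k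
    by (intro mat_power_in_Gq Gq_mult Rq_in_Gq Sq_in_Gq)
  define c where "c = 1 + 2 * Re q"
  have "2 \<le> c" using assms(2) by (simp add: c_def)
  have "norm (mat_power (Rq q ** Rq q ** Rq q ** Sq q) (Suc k) $ 2 $ 1) = lucas_U c (Suc k)" for k
    using R3S_power_row_2[OF assms(1), of k] lucas_U_growth[OF \<open>2 \<le> c\<close>, of "Suc k"] assms(1)
    by (simp add: c_def norm_mult norm_power)
  moreover have "inj (\<lambda>k. lucas_U c (Suc k))"
    using strict_mono_lucas_U[OF \<open>2 \<le> c\<close>] by (simp add: inj_def strict_mono_eq)
  ultimately have "inj ((\<lambda>A. norm (A $ 2 $ 1)) \<circ> (\<lambda>k. mat_power (Rq q ** Rq q ** Rq q ** Sq q) (Suc k)))"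
    by (simp add: comp_def)
  then show "inj (\<lambda>k. mat_power (Rq q ** Rq q ** Rq q ** Sq q) (Suc k))" by (rule inj_on_imageI2)
qed

section \<open>Finite specializations\<close>

definition row_pair :: "'a^2^2 \<Rightarrow> 2 \<Rightarrow> 'a \<times> 'a" where
  "row_pair M i = (M $ i $ 1, M $ i $ 2)"

definition act_R :: "complex \<Rightarrow> complex \<times> complex \<Rightarrow> complex \<times> complex" where
  "act_R z = (\<lambda>(x, y). (z * x, x + y))"

definition act_S :: "complex \<Rightarrow> complex \<times> complex \<Rightarrow> complex \<times> complex" where
  "act_S z = (\<lambda>(x, y). (y, - x / z))"

definition scale_pair :: "complex \<Rightarrow> complex \<times> complex \<Rightarrow> complex \<times> complex" where
  "scale_pair c = (\<lambda>(x, y). (c * x, c * y))"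

definition signed_powers :: "complex \<Rightarrow> complex set" where
  "signed_powers z = {s * z ^ a | s a. s = 1 \<or> s = -1}"

definition signed_multiples :: "complex \<Rightarrow> (complex \<times> complex) set \<Rightarrow> (complex \<times> complex) set" where
  "signed_multiples z L = {scale_pair c v | c v. c \<in> signed_powers z \<and> v \<in> L}"

lemma row_pair_mult_Rq: "row_pair (M ** Rq z) i = act_R z (row_pair M i)"
  by (simp add: row_pair_def act_R_def matrix_mult_nth_2 mult.commute)

lemma row_pair_mult_Sq: "row_pair (M ** Sq z) i = act_S z (row_pair M i)"
  by (simp add: row_pair_def act_S_def matrix_mult_nth_2 divide_inverse mult.commute)

lemma inj_act_R: "z \<noteq> 0 \<Longrightarrow> inj (act_R z)"
  by (rule injI) (auto simp: act_R_def split: prod.splits)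

lemma inj_act_S: "z \<noteq> 0 \<Longrightarrow> inj (act_S z)"
  by (rule injI) (auto simp: act_S_def split: prod.splits)

lemma row_pair_mult_inv:
  assumes "z \<noteq> 0" and "act_R z ` V = V" and "act_S z ` V = V"
    and "row_pair M i \<in> V"
  shows "row_pair (M ** matrix_inv (Rq z)) i \<in> V" and "row_pair (M ** matrix_inv (Sq z)) i \<in> V"
proof -
  have "act_R z (row_pair (M ** matrix_inv (Rq z)) i) = row_pair M i"
    unfolding row_pair_mult_Rq[symmetric] using \<open>z \<noteq> 0\<close>
    by (simp add: row_pair_def matrix_mult_nth_2 matrix_inv_Rq field_simps)
  then show "row_pair (M ** matrix_inv (Rq z)) i \<in> V"
    using assms(2,4) inj_act_R[OF \<open>z \<noteq> 0\<close>] by (metis image_iff injD)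
  have "act_S z (row_pair (M ** matrix_inv (Sq z)) i) = row_pair M i"
    unfolding row_pair_mult_Sq[symmetric] using \<open>z \<noteq> 0\<close>
    by (simp add: row_pair_def matrix_mult_nth_2 matrix_inv_Sq field_simps)
  then show "row_pair (M ** matrix_inv (Sq z)) i \<in> V"
    using assms(3,4) inj_act_S[OF \<open>z \<noteq> 0\<close>] by (metis image_iff injD)
qed

lemma finite_Gq_at_if_rows_closed:
  assumes "z \<noteq> 0" and "finite V" and "(1, 0) \<in> V" "(0, 1) \<in> V"
    and "act_R z ` V \<subseteq> V" and "act_S z ` V \<subseteq> V"
  shows "finite (Gq_at z)"
proof -
  have R: "act_R z ` V = V" using assms(2,5) inj_act_R[OF assms(1)]
    by (meson endo_inj_surj inj_on_subset subset_UNIV)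
  have S: "act_S z ` V = V" using assms(2,6) inj_act_S[OF assms(1)]
    by (meson endo_inj_surj inj_on_subset subset_UNIV)
  have rows: "row_pair (M z) i \<in> V" if "M \<in> Gq" for M i
    using that
  proof (induction arbitrary: i rule: Gq.induct)
    case one
    show ?case using assms(3,4) exhaust_2[of i] by (auto simp: row_pair_def)
  qed (use assms(5,6) row_pair_mult_Rq row_pair_mult_Sq row_pair_mult_inv[OF assms(1) R S] in auto)
  have "Gq_at z \<subseteq> (\<lambda>(u, v). vector [vector [fst u, snd u], vector [fst v, snd v]]) ` (V \<times> V)"
  proof
    fix A assume "A \<in> Gq_at z"
    then obtain M where "M \<in> Gq" "A = M z" unfolding Gq_at_def by blast
    then have "(row_pair A 1, row_pair A 2) \<in> V \<times> V" using rows by simp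
    moreover have "A = vector [vector [fst (row_pair A 1), snd (row_pair A 1)],
        vector [fst (row_pair A 2), snd (row_pair A 2)]]"
      by (rule mat2_eqI) (simp_all add: row_pair_def)
    ultimately show "A \<in> (\<lambda>(u, v). vector [vector [fst u, snd u], vector [fst v, snd v]]) ` (V \<times> V)"
      by force
  qed
  then show ?thesis using assms(2) finite_subset by blast
qed

lemma finite_signed_powers:
  assumes "z ^ n = 1" and "0 < n"
  shows "finite (signed_powers z)"
proof -
  have "signed_powers z \<subseteq> (\<lambda>(s, a). s * z ^ a) ` ({1, -1} \<times> {..<n})"
  proof
    fix c assume "c \<in> signed_powers z"
    then obtain s a where "c = s * z ^ a" "s = 1 \<or> s = -1" unfolding signed_powers_def by blast
    then have "c = s * z ^ (a mod n)" using power_eq_power_mod[OF assms(1)] by simp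
    then show "c \<in> (\<lambda>(s, a). s * z ^ a) ` ({1, -1} \<times> {..<n})"
      using \<open>s = 1 \<or> s = -1\<close> \<open>0 < n\<close> by force
  qed
  then show ?thesis by (rule finite_subset) simp
qed

lemma signed_powers_mult:
  assumes "c \<in> signed_powers z" and "d \<in> signed_powers z"
  shows "c * d \<in> signed_powers z"
proof -
  obtain s a t b where "c = s * z ^ a" "d = t * z ^ b" "s = 1 \<or> s = -1" "t = 1 \<or> t = -1"
    using assms unfolding signed_powers_def by blast
  then have "c * d = (s * t) * z ^ (a + b)" "s * t = 1 \<or> s * t = -1" by (auto simp: power_add)
  then show ?thesis unfolding signed_powers_def by blast
qed

lemma signed_powers_memI [simp]:
  "1 \<in> signed_powers z" "-1 \<in> signed_powers z" "z \<in> signed_powers z" "- z \<in> signed_powers z"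
  "z ^ a \<in> signed_powers z" "- (z ^ a) \<in> signed_powers z"
  unfolding signed_powers_def by (force intro: exI[of _ 0] exI[of _ 1])+

lemma scale_pair_in_signed_multiples [simp]:
  "c \<in> signed_powers z \<Longrightarrow> v \<in> L \<Longrightarrow> scale_pair c v \<in> signed_multiples z L"
  unfolding signed_multiples_def by blast

lemma in_signed_multiples [simp]: "v \<in> L \<Longrightarrow> v \<in> signed_multiples z L"
  using scale_pair_in_signed_multiples[of 1 z v L] by (simp add: scale_pair_def case_prod_beta)

lemma finite_Gq_at_if_lines_closed:
  assumes "z ^ n = 1" and "0 < n" and "finite L" and "(1, 0) \<in> L" "(0, 1) \<in> L"
    and "act_R z ` L \<subseteq> signed_multiples z L" and "act_S z ` L \<subseteq> signed_multiples z L"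
  shows "finite (Gq_at z)"
proof (rule finite_Gq_at_if_rows_closed)
  show "z \<noteq> 0" using assms(1,2) by (metis power_0_left zero_neq_one not_gr0)
  have "signed_multiples z L = (\<lambda>(c, v). scale_pair c v) ` (signed_powers z \<times> L)"
    unfolding signed_multiples_def by auto
  then show "finite (signed_multiples z L)"
    using finite_signed_powers[OF assms(1,2)] assms(3) by simp
  show "(1, 0) \<in> signed_multiples z L" "(0, 1) \<in> signed_multiples z L" using assms(4,5) by simp_all
  have scale_R: "act_R z (scale_pair c v) = scale_pair c (act_R z v)"
    and scale_S: "act_S z (scale_pair c v) = scale_pair c (act_S z v)"
    and scale_scale: "scale_pair c (scale_pair d v) = scale_pair (c * d) v" for c d v
    by (simp_all add: act_R_def act_S_def scale_pair_def algebra_simps split: prod.splits)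
  show "act_R z ` signed_multiples z L \<subseteq> signed_multiples z L"
    using assms(6) unfolding signed_multiples_def
    by (fastforce simp: scale_R scale_scale intro: signed_powers_mult)
  show "act_S z ` signed_multiples z L \<subseteq> signed_multiples z L"
    using assms(7) unfolding signed_multiples_def
    by (fastforce simp: scale_S scale_scale intro: signed_powers_mult)
qed

text \<open>
  The vectors below arise by closing \<open>{(1, 0), (0, 1)}\<close> under \<open>act_R\<close> and \<open>act_S\<close> up to
  signed powers of \<open>z\<close>.
\<close>

lemma finite_Gq_at_order_2: "finite (Gq_at (-1))"
proof (rule finite_Gq_at_if_lines_closed[of "-1" 2 "{(0, 1), (1, 0), (-1, 1)}"])
  have "act_S (-1) (-1, 1) = scale_pair (-1) (-1, 1)" by (simp add: act_S_def scale_pair_def)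
  then show "act_R (-1) ` {(0, 1), (1, 0), (-1, 1)} \<subseteq> signed_multiples (-1) {(0, 1), (1, 0), (-1, 1)}"
    "act_S (-1) ` {(0, 1), (1, 0), (-1, 1)} \<subseteq> signed_multiples (-1) {(0, 1), (1, 0), (-1, 1)}"
    by (simp_all add: act_R_def act_S_def)
qed simp_all

lemma finite_Gq_at_order_3:
  fixes z :: complex
  assumes h: "1 + z + z ^ 2 = 0"
  shows "finite (Gq_at z)"
proof -
  define L where "L = {(0, 1), (1, 0), (z, 1), (- 1 - z, 1 + z)}"
  have "z ^ 3 = 1" using h by Groebner_Basis.algebra
  then have inv: "inverse z = z ^ 2" by (intro inverse_unique) (simp add: power_Suc[symmetric] del: power_Suc)
  \<comment> \<open>HOL-Algebra shadows the method name \<open>algebra\<close>. The Groebner basis method sometimes fails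
    on plain ring identities when given \<open>h\<close>, hence the two attempts, here and below.\<close>
  have "act_R z (0, 1) = (0, 1)" "act_S z (0, 1) = (1, 0)"
    "act_R z (1, 0) = (z, 1)" "act_S z (1, 0) = scale_pair (- (z ^ 2)) (0, 1)"
    "act_R z (z, 1) = (- 1 - z, 1 + z)" "act_S z (z, 1) = scale_pair z (- 1 - z, 1 + z)"
    "act_R z (- 1 - z, 1 + z) = (1, 0)" "act_S z (- 1 - z, 1 + z) = scale_pair (- z) (z, 1)"
    by (simp_all add: act_R_def act_S_def scale_pair_def divide_inverse inv)
      ((rule conjI)?, (Groebner_Basis.algebra | use h in Groebner_Basis.algebra))+
  then show ?thesis
    by (intro finite_Gq_at_if_lines_closed[OF \<open>z ^ 3 = 1\<close>, of L]) (simp_all add: L_def)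
qed

lemma finite_Gq_at_order_4:
  fixes z :: complex
  assumes h: "1 + z ^ 2 = 0"
  shows "finite (Gq_at z)"
proof -
  define L where "L = {(0, 1), (1, 0), (z, 1), (- 1, 1 + z), (1, - 1), (1 + z, - z)}"
  have "z ^ 4 = 1" using h by Groebner_Basis.algebra
  then have inv: "inverse z = z ^ 3" by (intro inverse_unique) (simp add: power_Suc[symmetric] del: power_Suc)
  have "act_R z (0, 1) = (0, 1)" "act_S z (0, 1) = (1, 0)"
    "act_R z (1, 0) = (z, 1)" "act_S z (1, 0) = scale_pair z (0, 1)"
    "act_R z (z, 1) = (- 1, 1 + z)" "act_S z (z, 1) = (1, - 1)"
    "act_R z (- 1, 1 + z) = scale_pair (z ^ 3) (1, - 1)" "act_S z (- 1, 1 + z) = (1 + z, - z)"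
    "act_R z (1, - 1) = scale_pair z (1, 0)" "act_S z (1, - 1) = scale_pair z (z, 1)"
    "act_R z (1 + z, - z) = scale_pair z (1 + z, - z)" "act_S z (1 + z, - z) = scale_pair z (- 1, 1 + z)"
    by (simp_all add: act_R_def act_S_def scale_pair_def divide_inverse inv)
      ((rule conjI)?, (Groebner_Basis.algebra | use h in Groebner_Basis.algebra))+
  then show ?thesis
    by (intro finite_Gq_at_if_lines_closed[OF \<open>z ^ 4 = 1\<close>, of L]) (simp_all add: L_def)
qed

lemma finite_Gq_at_order_5:
  fixes z :: complex
  assumes h: "1 + z + z ^ 2 + z ^ 3 + z ^ 4 = 0"
  shows "finite (Gq_at z)"
proof -
  define L where "L = {(0, 1), (1, 0), (z, 1), (z ^ 2, 1 + z), (1, - 1), (z ^ 3, 1 + z + z ^ 2),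
    (1 + z, - z), (1 + z + z ^ 2, - (z ^ 2)), (z + z ^ 2 + z ^ 3, 1 + z),
    (- 1 - z, 1 + 2 * z + z ^ 2 + z ^ 3), (1 + z, - 1 - z - z ^ 2),
    (1 + 2 * z + z ^ 2 + z ^ 3, - z - z ^ 2 - z ^ 3)}"
  have "z ^ 5 = 1" using h by Groebner_Basis.algebra
  then have inv: "inverse z = z ^ 4" by (intro inverse_unique) (simp add: power_Suc[symmetric] del: power_Suc)
  have "act_R z (0, 1) = (0, 1)" "act_S z (0, 1) = (1, 0)"
    "act_R z (1, 0) = (z, 1)" "act_S z (1, 0) = scale_pair (- (z ^ 4)) (0, 1)"
    "act_R z (z, 1) = (z ^ 2, 1 + z)" "act_S z (z, 1) = (1, - 1)"
    "act_R z (z ^ 2, 1 + z) = (z ^ 3, 1 + z + z ^ 2)" "act_S z (z ^ 2, 1 + z) = (1 + z, - z)"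
    "act_R z (1, - 1) = scale_pair z (1, 0)" "act_S z (1, - 1) = scale_pair (- (z ^ 4)) (z, 1)"
    "act_R z (z ^ 3, 1 + z + z ^ 2) = scale_pair (z ^ 4) (1, - 1)"
    "act_S z (z ^ 3, 1 + z + z ^ 2) = (1 + z + z ^ 2, - (z ^ 2))"
    "act_R z (1 + z, - z) = scale_pair (- (z ^ 3)) (1 + z + z ^ 2, - (z ^ 2))"
    "act_S z (1 + z, - z) = scale_pair (- (z ^ 4)) (z ^ 2, 1 + z)"
    "act_R z (1 + z + z ^ 2, - (z ^ 2)) = (z + z ^ 2 + z ^ 3, 1 + z)"
    "act_S z (1 + z + z ^ 2, - (z ^ 2)) = scale_pair (- (z ^ 4)) (z ^ 3, 1 + z + z ^ 2)"
    "act_R z (z + z ^ 2 + z ^ 3, 1 + z) = (- 1 - z, 1 + 2 * z + z ^ 2 + z ^ 3)"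
    "act_S z (z + z ^ 2 + z ^ 3, 1 + z) = (1 + z, - 1 - z - z ^ 2)"
    "act_R z (- 1 - z, 1 + 2 * z + z ^ 2 + z ^ 3) = scale_pair (- z) (1 + z, - 1 - z - z ^ 2)"
    "act_S z (- 1 - z, 1 + 2 * z + z ^ 2 + z ^ 3) = (1 + 2 * z + z ^ 2 + z ^ 3, - z - z ^ 2 - z ^ 3)"
    "act_R z (1 + z, - 1 - z - z ^ 2) = scale_pair z (1 + z, - z)"
    "act_S z (1 + z, - 1 - z - z ^ 2) = scale_pair (- (z ^ 4)) (z + z ^ 2 + z ^ 3, 1 + z)"
    "act_R z (1 + 2 * z + z ^ 2 + z ^ 3, - z - z ^ 2 - z ^ 3)
      = scale_pair z (1 + 2 * z + z ^ 2 + z ^ 3, - z - z ^ 2 - z ^ 3)"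
    "act_S z (1 + 2 * z + z ^ 2 + z ^ 3, - z - z ^ 2 - z ^ 3)
      = scale_pair (- (z ^ 4)) (- 1 - z, 1 + 2 * z + z ^ 2 + z ^ 3)"
    by (simp_all add: act_R_def act_S_def scale_pair_def divide_inverse inv)
      ((rule conjI)?, (Groebner_Basis.algebra | use h in Groebner_Basis.algebra))+
  then show ?thesis
    by (intro finite_Gq_at_if_lines_closed[OF \<open>z ^ 5 = 1\<close>, of L]) (simp_all add: L_def)
qed

lemma finite_Gq_at_primitive_root:
  assumes "n \<in> {2, 3, 4, 5}" and "primitive_root_of_unity n z"
  shows "finite (Gq_at z)"
proof -
  have zn: "z ^ n = 1" and z_prim: "\<And>k. 0 < k \<Longrightarrow> k < n \<Longrightarrow> z ^ k \<noteq> 1"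
    using assms(2) unfolding primitive_root_of_unity_def by auto
  consider "n = 2" | "n = 3" | "n = 4" | "n = 5" using assms(1) by blast
  then show ?thesis
  proof cases
    case 1
    have "(z - 1) * (z + 1) = 0" using zn 1 by (simp add: algebra_simps power2_eq_square)
    then have "z = -1" using z_prim[of 1] 1 by (simp add: add_eq_0_iff2)
    then show ?thesis using finite_Gq_at_order_2 by simp
  next
    case 2
    have "z ^ 3 = 1" using zn 2 by simp
    then have "(z - 1) * (1 + z + z ^ 2) = 0" by Groebner_Basis.algebra
    then show ?thesis using z_prim[of 1] 2 finite_Gq_at_order_3 by simp
  next
    case 3
    have "z ^ 4 = 1" using zn 3 by simp
    then have "(z ^ 2 - 1) * (1 + z ^ 2) = 0" by Groebner_Basis.algebra
    then show ?thesis using z_prim[of 2] 3 finite_Gq_at_order_4 by simp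
  next
    case 4
    have "z ^ 5 = 1" using zn 4 by simp
    then have "(z - 1) * (1 + z + z ^ 2 + z ^ 3 + z ^ 4) = 0" by Groebner_Basis.algebra
    then show ?thesis using z_prim[of 1] 4 finite_Gq_at_order_5 by simp
  qed
qed

lemma infinite_Gq_at_primitive_root_ge_6:
  assumes prim: "primitive_root_of_unity n z" and "6 \<le> n"
  shows "infinite (Gq_at z)"
proof
  assume fin: "finite (Gq_at z)"
  define \<omega> where "\<omega> = cis (2 * pi / n)"
  obtain m where "coprime m n" "z ^ m = \<omega>"
    using primitive_root_power_eq_cis[OF prim] unfolding \<omega>_def by blast
  have "z ^ n = 1" "0 < n" using prim unfolding primitive_root_of_unity_def by auto
  then have "z \<noteq> 0" by (metis power_0_left zero_neq_one not_gr0)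
  have "\<omega> \<noteq> 0" by (simp add: \<omega>_def)
  have "finite (Gq_at \<omega>)"
  proof (rule finite_Gq_at_transfer[OF \<open>z \<noteq> 0\<close> \<open>\<omega> \<noteq> 0\<close> _ fin])
    show "poly (of_int_poly P) \<omega> = 0" if "poly (of_int_poly P) z = 0" for P
      using int_poly_root_power_coprime[OF \<open>z ^ n = 1\<close> \<open>0 < n\<close> that \<open>coprime m n\<close>] \<open>z ^ m = \<omega>\<close>
      by simp
  qed
  moreover have "1 / 2 \<le> Re \<omega>"
  proof -
    have "cos (pi / 3) \<le> cos (2 * pi / n)"
      using \<open>6 \<le> n\<close> by (intro cos_monotone_0_pi_le) (simp_all add: field_simps)
    then show ?thesis by (simp add: \<omega>_def cos_60)
  qed
  ultimately show False using infinite_Gq_at_unit_circle[of \<omega>] by (simp add: \<omega>_def)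
qed

lemma primitive_root_of_unity_exists:
  assumes "0 < k" and "z ^ k = 1"
  obtains n where "primitive_root_of_unity n z"
proof
  define n where "n = (LEAST n. 0 < n \<and> z ^ n = 1)"
  show "primitive_root_of_unity n z"
    unfolding primitive_root_of_unity_def
    using LeastI[of "\<lambda>n. 0 < n \<and> z ^ n = 1", OF conjI[OF assms]] not_less_Least[of _ "\<lambda>n. 0 < n \<and> z ^ n = 1"]
    unfolding n_def[symmetric] by blast
qed

theorem theorem1p1:
  fixes \<zeta> :: complex
  assumes "\<zeta> \<noteq> 0"
  shows "finite (Gq_at \<zeta>) \<longleftrightarrow> (\<exists>n\<in>{2,3,4,5}. primitive_root_of_unity n \<zeta>)"
proof
  assume fin: "finite (Gq_at \<zeta>)"
  then obtain k where "0 < k" "\<zeta> ^ k = 1" using infinite_Gq_at_not_root_of_unity[OF assms] by blast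
  then obtain n where prim: "primitive_root_of_unity n \<zeta>" by (rule primitive_root_of_unity_exists)
  have "n \<noteq> 1"
  proof
    assume "n = 1"
    then have "\<zeta> = 1" using prim unfolding primitive_root_of_unity_def by simp
    then show False using fin infinite_Gq_at_unit_circle[of 1] by simp
  qed
  moreover have "\<not> 6 \<le> n" using infinite_Gq_at_primitive_root_ge_6[OF prim] fin by blast
  moreover have "0 < n" using prim unfolding primitive_root_of_unity_def by simp
  ultimately have "n \<in> {2, 3, 4, 5}" by auto
  with prim show "\<exists>n\<in>{2,3,4,5}. primitive_root_of_unity n \<zeta>" by blast
qed (auto intro: finite_Gq_at_primitive_root)

end
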